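(* For real parameters $\alpha,\delta$ define $C:[0,1]^2\to\mathbb{R}$ by $$C(u,v;\delta,\alpha)=uv+\delta\left(1-e^{\alpha(u-u^2)}\right)\left(1-e^{\alpha(v-v^2)}\right).$$ Let $$\delta^{\star}(\alpha)=\begin{cases}\dfrac{1}{\alpha^2}, & \alpha\in(-\infty,2]\setminus\{0\},\\[2mm] \dfrac{1}{2\alpha}\exp\left\{1-\dfrac{\alpha}{2}\right\}, & \alpha>2.\end{cases}$$ Then: (i) if $\alpha=0$, then for every $\delta\in\mathbb{R}$, $C(\cdot,\cdot;\delta,0)$ is the product copula $C(u,v)=uv$; (ii) if $\alpha\neq 0$ and $|\delta|\le\delta^{\star}(\alpha)$, then $C(\cdot,\cdot;\delta,\alpha)$ is a bivariate copula, i.e. $C(u,0)=C(0,v)=0$, $C(u,1)=u$, $C(1,v)=v$ for all $u,v\in[0,1]$, and $C(u_2,v_2)-C(u_1,v_2)-C(u_2,v_1)+C(u_1,v_1)\ge 0$ for all $0\le u_1<u_2\le1$, $0\le v_1<v_2\le 1$. Its density is $$c(u,v)=\frac{\partial^2 C}{\partial u\,\partial v}=1+\alpha^2\delta(1-2u)(1-2v)\exp\{\alpha(u-u^2+v-v^2)\}\ge 0\quad\text{on }[0,1]^2.$$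
   Context: A bivariate copula is a function $C:[0,1]^2\to[0,1]$ satisfying the stated boundary conditions and the 2-increasing property. *)

theory Defs
  imports "HOL-Analysis.Analysis"
begin

definition Cfam :: "real \<Rightarrow> real \<Rightarrow> real \<Rightarrow> real \<Rightarrow> real" where
  "Cfam \<delta> \<alpha> u v =
     u * v + \<delta> * (1 - exp (\<alpha> * (u - u\<^sup>2))) * (1 - exp (\<alpha> * (v - v\<^sup>2)))"

definition cdens :: "real \<Rightarrow> real \<Rightarrow> real \<Rightarrow> real \<Rightarrow> real" where
  "cdens \<delta> \<alpha> u v =
     1 + \<alpha>\<^sup>2 * \<delta> * (1 - 2 * u) * (1 - 2 * v) * exp (\<alpha> * (u - u\<^sup>2 + v - v\<^sup>2))"

definition delta_star :: "real \<Rightarrow> real" where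
  "delta_star \<alpha> = (if \<alpha> \<le> 2 then 1 / \<alpha>\<^sup>2 else 1 / (2*\<alpha>) * exp (1 - \<alpha>/2))"

definition bivariate_copula :: "(real \<Rightarrow> real \<Rightarrow> real) \<Rightarrow> bool" where
  "bivariate_copula C \<longleftrightarrow>
     (\<forall>u\<in>{0..1}. \<forall>v\<in>{0..1}. C u v \<in> {0..1}) \<and>
     (\<forall>u\<in>{0..1}. C u 0 = 0 \<and> C 0 u = 0 \<and> C u 1 = u \<and> C 1 u = u) \<and>
     (\<forall>u1 u2 v1 v2. 0 \<le> u1 \<longrightarrow> u1 < u2 \<longrightarrow> u2 \<le> 1 \<longrightarrow> 0 \<le> v1 \<longrightarrow> v1 < v2 \<longrightarrow> v2 \<le> 1 \<longrightarrow>
        C u2 v2 - C u1 v2 - C u2 v1 + C u1 v1 \<ge> 0)"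

end

theory Submission
  imports Defs
begin

text \<open>The family has the form C(u,v) = uv + \<delta> \<phi>(u) \<phi>(v) with \<phi>(x) = 1 - exp (\<alpha>(x - x^2))
  vanishing at 0 and 1, so it has uniform margins, and by the mean value theorem in each
  variable every rectangle increment equals the rectangle's area times the density
  1 + \<delta> \<phi>'(a) \<phi>'(b) at some interior point. Hence C is a copula as soon as this density
  is nonnegative, which holds because delta_star is the reciprocal of the maximum of
  \<phi>'^2 on [0,1] and 2 |\<phi>'(a) \<phi>'(b)| \<le> \<phi>'(a)^2 + \<phi>'(b)^2.\<close>

lemma bivariate_copulaI:
  assumes boundary: "\<And>u. 0 \<le> u \<Longrightarrow> u \<le> 1 \<Longrightarrow> C u 0 = 0 \<and> C 0 u = 0 \<and> C u 1 = u \<and> C 1 u = u"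
    and two_increasing: "\<And>u1 u2 v1 v2. 0 \<le> u1 \<Longrightarrow> u1 < u2 \<Longrightarrow> u2 \<le> 1 \<Longrightarrow>
          0 \<le> v1 \<Longrightarrow> v1 < v2 \<Longrightarrow> v2 \<le> 1 \<Longrightarrow> C u2 v2 - C u1 v2 - C u2 v1 + C u1 v1 \<ge> 0"
  shows "bivariate_copula C"
proof -
  have "C u v \<in> {0..1}" if u: "0 \<le> u" "u \<le> 1" and v: "0 \<le> v" "v \<le> 1" for u v
  proof -
    have "0 \<le> C u v"
    proof (cases "u = 0 \<or> v = 0")
      case True
      then show ?thesis using boundary[of u] boundary[of v] u v by auto
    next
      case False
      then show ?thesis
        using two_increasing[of 0 u 0 v] boundary[of 0] boundary[of u] boundary[of v] u v by simp
    qed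
    moreover have "C u v \<le> v"
    proof (cases "u = 1 \<or> v = 0")
      case True
      then show ?thesis using boundary[of u] boundary[of v] u v by auto
    next
      case False
      then show ?thesis
        using two_increasing[of u 1 0 v] boundary[of 0] boundary[of u] boundary[of v] u v by simp
    qed
    ultimately show ?thesis using v by simp
  qed
  with boundary two_increasing show ?thesis
    unfolding bivariate_copula_def by simp
qed

lemma bivariate_copula_product_perturbation:
  fixes \<phi> \<phi>' :: "real \<Rightarrow> real"
  assumes "\<phi> 0 = 0" and "\<phi> 1 = 0"
    and deriv: "\<And>x. 0 \<le> x \<Longrightarrow> x \<le> 1 \<Longrightarrow> (\<phi> has_real_derivative \<phi>' x) (at x)"
    and density_nonneg: "\<And>a b. 0 \<le> a \<Longrightarrow> a \<le> 1 \<Longrightarrow> 0 \<le> b \<Longrightarrow> b \<le> 1 \<Longrightarrow> 1 + \<delta> * \<phi>' a * \<phi>' b \<ge> 0"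
  shows "bivariate_copula (\<lambda>u v. u * v + \<delta> * \<phi> u * \<phi> v)"
proof (rule bivariate_copulaI)
  fix u :: real
  show "u * 0 + \<delta> * \<phi> u * \<phi> 0 = 0 \<and> 0 * u + \<delta> * \<phi> 0 * \<phi> u = 0 \<and>
        u * 1 + \<delta> * \<phi> u * \<phi> 1 = u \<and> 1 * u + \<delta> * \<phi> 1 * \<phi> u = u"
    using assms(1,2) by simp
next
  fix u1 u2 v1 v2 :: real
  assume u: "0 \<le> u1" "u1 < u2" "u2 \<le> 1" and v: "0 \<le> v1" "v1 < v2" "v2 \<le> 1"
  obtain a where a: "u1 < a" "a < u2" "\<phi> u2 - \<phi> u1 = (u2 - u1) * \<phi>' a"
    using MVT2[of u1 u2 \<phi> \<phi>'] deriv u by force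
  obtain b where b: "v1 < b" "b < v2" "\<phi> v2 - \<phi> v1 = (v2 - v1) * \<phi>' b"
    using MVT2[of v1 v2 \<phi> \<phi>'] deriv v by force
  have "(u2 * v2 + \<delta> * \<phi> u2 * \<phi> v2) - (u1 * v2 + \<delta> * \<phi> u1 * \<phi> v2)
          - (u2 * v1 + \<delta> * \<phi> u2 * \<phi> v1) + (u1 * v1 + \<delta> * \<phi> u1 * \<phi> v1)
        = (u2 - u1) * (v2 - v1) + \<delta> * (\<phi> u2 - \<phi> u1) * (\<phi> v2 - \<phi> v1)"
    by (simp add: algebra_simps)
  also have "\<dots> = (u2 - u1) * (v2 - v1) * (1 + \<delta> * \<phi>' a * \<phi>' b)"
    unfolding a(3) b(3) by (simp add: algebra_simps)
  also have "\<dots> \<ge> 0"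
    using density_nonneg[of a b] a b u v by simp
  finally show "(u2 * v2 + \<delta> * \<phi> u2 * \<phi> v2) - (u1 * v2 + \<delta> * \<phi> u1 * \<phi> v2)
          - (u2 * v1 + \<delta> * \<phi> u2 * \<phi> v1) + (u1 * v1 + \<delta> * \<phi> u1 * \<phi> v1) \<ge> 0" .
qed

lemma mixed_partial_product_perturbation:
  fixes \<phi> \<phi>' :: "real \<Rightarrow> real"
  assumes deriv: "\<And>x. (\<phi> has_real_derivative \<phi>' x) (at x)"
  shows "((\<lambda>u'. deriv (\<lambda>v'. u' * v' + \<delta> * \<phi> u' * \<phi> v') v) has_real_derivative
           1 + \<delta> * \<phi>' u * \<phi>' v) (at u)"
proof -
  have "deriv (\<lambda>v'. u' * v' + \<delta> * \<phi> u' * \<phi> v') v = u' + \<delta> * \<phi> u' * \<phi>' v" for u'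
    by (rule DERIV_imp_deriv) (auto intro!: derivative_eq_intros deriv)
  moreover have "((\<lambda>u'. u' + \<delta> * \<phi> u' * \<phi>' v) has_real_derivative 1 + \<delta> * \<phi>' u * \<phi>' v) (at u)"
    by (auto intro!: derivative_eq_intros deriv)
  ultimately show ?thesis by simp
qed

definition Cfam_generator :: "real \<Rightarrow> real \<Rightarrow> real" where
  "Cfam_generator \<alpha> x = 1 - exp (\<alpha> * (x - x\<^sup>2))"

definition Cfam_generator_deriv :: "real \<Rightarrow> real \<Rightarrow> real" where
  "Cfam_generator_deriv \<alpha> x = - \<alpha> * (1 - 2 * x) * exp (\<alpha> * (x - x\<^sup>2))"

lemma has_real_derivative_Cfam_generator:
  "(Cfam_generator \<alpha> has_real_derivative Cfam_generator_deriv \<alpha> x) (at x)"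
  unfolding Cfam_generator_def[abs_def] Cfam_generator_deriv_def
  by (auto intro!: derivative_eq_intros simp: algebra_simps)

lemma Cfam_eq_product_perturbation:
  "Cfam \<delta> \<alpha> = (\<lambda>u v. u * v + \<delta> * Cfam_generator \<alpha> u * Cfam_generator \<alpha> v)"
  by (simp add: fun_eq_iff Cfam_def Cfam_generator_def)

lemma cdens_eq_product_perturbation:
  "cdens \<delta> \<alpha> u v = 1 + \<delta> * Cfam_generator_deriv \<alpha> u * Cfam_generator_deriv \<alpha> v"
proof -
  have "exp (\<alpha> * (u - u\<^sup>2 + v - v\<^sup>2)) = exp (\<alpha> * (u - u\<^sup>2)) * exp (\<alpha> * (v - v\<^sup>2))"
    by (simp add: exp_add[symmetric] algebra_simps)
  then show ?thesis
    unfolding cdens_def Cfam_generator_deriv_def by (simp add: power2_eq_square)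
qed

lemma mult_exp_one_minus_le_one: "(x::real) * exp (1 - x) \<le> 1"
proof (cases "x \<le> 0")
  case True
  then show ?thesis using mult_nonpos_nonneg[of x "exp (1 - x)"] by simp
next
  case False
  have "x * exp (1 - x) \<le> exp (x - 1) * exp (1 - x)"
    using exp_ge_add_one_self[of "x - 1"] False by (intro mult_right_mono) auto
  also have "\<dots> = 1" by (simp flip: exp_add)
  finally show ?thesis .
qed

text \<open>With s = (1 - 2x)^2 one has x - x^2 = (1 - s)/4, so the square of the generator's
  derivative is \<alpha>^2 s exp (\<alpha>(1 - s)/2). On [0,1] this is maximal at s = 1 if \<alpha> \<le> 2 and
  at s = 2/\<alpha> otherwise; delta_star is the reciprocal of that maximum.\<close>

lemma Cfam_generator_deriv_sq:
  "(Cfam_generator_deriv \<alpha> x)\<^sup>2 = \<alpha>\<^sup>2 * (1 - 2 * x)\<^sup>2 * exp (\<alpha> * (1 - (1 - 2 * x)\<^sup>2) / 2)"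
proof -
  have "\<alpha> * (1 - (1 - 2 * x)\<^sup>2) / 2 = 2 * (\<alpha> * (x - x\<^sup>2))"
    by (simp add: power2_eq_square field_simps)
  then have "exp (\<alpha> * (1 - (1 - 2 * x)\<^sup>2) / 2) = (exp (\<alpha> * (x - x\<^sup>2)))\<^sup>2"
    by (simp only: exp_double)
  then show ?thesis
    unfolding Cfam_generator_deriv_def by (simp add: power_mult_distrib)
qed

lemma delta_star_mult_le_one:
  assumes "\<alpha> \<noteq> 0" "0 \<le> s" "s \<le> 1"
  shows "delta_star \<alpha> * (\<alpha>\<^sup>2 * s * exp (\<alpha> * (1 - s) / 2)) \<le> 1"
proof (cases "\<alpha> \<le> 2")
  case True
  have "s * exp (\<alpha> * (1 - s) / 2) \<le> 1"
  proof (cases "\<alpha> \<le> 0")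
    case True
    then have "exp (\<alpha> * (1 - s) / 2) \<le> 1"
      using assms by (simp add: mult_nonpos_nonneg)
    then show ?thesis using assms by (simp add: mult_le_one)
  next
    case False
    have "\<alpha> * (1 - s) \<le> 2 * (1 - s)"
      using \<open>\<alpha> \<le> 2\<close> assms by (intro mult_right_mono) auto
    then have "exp (\<alpha> * (1 - s) / 2) \<le> exp (1 - s)"
      by simp
    then have "s * exp (\<alpha> * (1 - s) / 2) \<le> s * exp (1 - s)"
      using assms by (simp add: mult_left_mono)
    then show ?thesis using mult_exp_one_minus_le_one[of s] by linarith
  qed
  then show ?thesis using True assms by (simp add: delta_star_def)
next
  case False
  have "exp (1 - \<alpha> / 2) * exp (\<alpha> * (1 - s) / 2) = exp (1 - \<alpha> * s / 2)"
    by (simp flip: exp_add add: algebra_simps diff_divide_distrib)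
  then have "delta_star \<alpha> * (\<alpha>\<^sup>2 * s * exp (\<alpha> * (1 - s) / 2))
      = \<alpha> * s / 2 * exp (1 - \<alpha> * s / 2)"
    using False by (simp add: delta_star_def power2_eq_square field_simps)
  also have "\<dots> \<le> 1" by (rule mult_exp_one_minus_le_one)
  finally show ?thesis .
qed

lemma delta_star_mult_Cfam_generator_deriv_sq_le_one:
  assumes "\<alpha> \<noteq> 0" "0 \<le> x" "x \<le> 1"
  shows "delta_star \<alpha> * (Cfam_generator_deriv \<alpha> x)\<^sup>2 \<le> 1"
proof -
  have "(1 - 2 * x)\<^sup>2 \<le> 1"
    using assms by (simp add: abs_square_le_1)
  then show ?thesis
    unfolding Cfam_generator_deriv_sq mult.assoc[symmetric]
    using delta_star_mult_le_one[OF assms(1), of "(1 - 2 * x)\<^sup>2"] by simp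
qed

lemma cdens_nonneg:
  assumes "\<alpha> \<noteq> 0" "\<bar>\<delta>\<bar> \<le> delta_star \<alpha>" "0 \<le> u" "u \<le> 1" "0 \<le> v" "v \<le> 1"
  shows "cdens \<delta> \<alpha> u v \<ge> 0"
proof -
  define a b where "a = Cfam_generator_deriv \<alpha> u" and "b = Cfam_generator_deriv \<alpha> v"
  have "- (\<delta> * a * b) \<le> \<bar>\<delta>\<bar> * \<bar>a\<bar> * \<bar>b\<bar>"
    by (simp add: abs_mult[symmetric] mult.assoc)
  also have "\<dots> \<le> \<bar>\<delta>\<bar> * ((a\<^sup>2 + b\<^sup>2) / 2)"
    using sum_squares_bound[of "\<bar>a\<bar>" "\<bar>b\<bar>"] by (simp add: mult_left_mono mult.assoc)
  also have "\<dots> \<le> delta_star \<alpha> * ((a\<^sup>2 + b\<^sup>2) / 2)"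
    using assms(2) by (simp add: mult_right_mono)
  also have "\<dots> \<le> 1"
    using delta_star_mult_Cfam_generator_deriv_sq_le_one[OF assms(1,3,4)]
      delta_star_mult_Cfam_generator_deriv_sq_le_one[OF assms(1,5,6)]
    unfolding a_def b_def by (simp add: field_simps)
  finally show ?thesis
    unfolding cdens_eq_product_perturbation a_def[symmetric] b_def[symmetric] by simp
qed

lemma bivariate_copula_Cfam:
  assumes "\<And>u v. 0 \<le> u \<Longrightarrow> u \<le> 1 \<Longrightarrow> 0 \<le> v \<Longrightarrow> v \<le> 1 \<Longrightarrow> cdens \<delta> \<alpha> u v \<ge> 0"
  shows "bivariate_copula (Cfam \<delta> \<alpha>)"
  unfolding Cfam_eq_product_perturbation
  using assms
  by (intro bivariate_copula_product_perturbation[OF _ _ has_real_derivative_Cfam_generator])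
     (simp_all add: Cfam_generator_def cdens_eq_product_perturbation)

theorem mainTheorem1:
  fixes \<alpha> \<delta> :: real
  shows "(\<alpha> = 0 \<longrightarrow>
            (\<forall>u\<in>{0..1}. \<forall>v\<in>{0..1}. Cfam \<delta> 0 u v = u * v) \<and>
            bivariate_copula (Cfam \<delta> 0))
       \<and> (\<alpha> \<noteq> 0 \<and> \<bar>\<delta>\<bar> \<le> delta_star \<alpha> \<longrightarrow>
            bivariate_copula (Cfam \<delta> \<alpha>) \<and>
            (\<forall>u\<in>{0..1}. \<forall>v\<in>{0..1}.
               ((\<lambda>u'. deriv (\<lambda>v'. Cfam \<delta> \<alpha> u' v') v) has_real_derivative cdens \<delta> \<alpha> u v) (at u)
               \<and> cdens \<delta> \<alpha> u v \<ge> 0))"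
proof (intro conjI impI)
  show "\<forall>u\<in>{0..1}. \<forall>v\<in>{0..1}. Cfam \<delta> 0 u v = u * v"
    by (simp add: Cfam_def)
  show "bivariate_copula (Cfam \<delta> 0)"
    by (rule bivariate_copula_Cfam) (simp add: cdens_def)
next
  assume \<alpha>\<delta>: "\<alpha> \<noteq> 0 \<and> \<bar>\<delta>\<bar> \<le> delta_star \<alpha>"
  then show "bivariate_copula (Cfam \<delta> \<alpha>)"
    by (intro bivariate_copula_Cfam cdens_nonneg) auto
  have "((\<lambda>u'. deriv (\<lambda>v'. Cfam \<delta> \<alpha> u' v') v) has_real_derivative cdens \<delta> \<alpha> u v) (at u)" for u v
    unfolding Cfam_eq_product_perturbation cdens_eq_product_perturbation
    using has_real_derivative_Cfam_generator by (rule mixed_partial_product_perturbation)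
  then show "\<forall>u\<in>{0..1}. \<forall>v\<in>{0..1}.
               ((\<lambda>u'. deriv (\<lambda>v'. Cfam \<delta> \<alpha> u' v') v) has_real_derivative cdens \<delta> \<alpha> u v) (at u)
               \<and> cdens \<delta> \<alpha> u v \<ge> 0"
    using \<alpha>\<delta> cdens_nonneg by auto
qed

end
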